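(* Let $f:\mathbb{R}^n\to\mathbb{R}\cup\{+\infty\}$ be a polyhedral M-convex function with bounded $\operatorname{dom}_{\mathbb{R}} f$. Then for all $x,y\in\operatorname{dom}_{\mathbb{R}} f$, $f(y)-f(x)\ge\tfrac12\|y-x\|_1\,\phi_{\mathbb{R}}(x)$.
   Context: $N=\{1,\dots,n\}$; $\chi_i$ is the $i$-th unit vector. $\operatorname{dom}_{\mathbb{R}} f=\{x\in\mathbb{R}^n:f(x)<+\infty\}$. A polyhedral convex function $f:\mathbb{R}^n\to\mathbb{R}\cup\{+\infty\}$ (epigraph a polyhedron, $\operatorname{dom}_{\mathbb{R}} f\neq\emptyset$) is M-convex if for all $x,y\in\operatorname{dom}_{\mathbb{R}} f$ and every $i$ with $x(i)>y(i)$ there exist $j$ with $x(j)<y(j)$ and $\epsilon_0>0$ such that $f(x)+f(y)\ge f(x-\epsilon(\chi_i-\chi_j))+f(y+\epsilon(\chi_i-\chi_j))$ for all $\epsilon\in[0,\epsilon_0]$. For $x\in\operatorname{dom}_{\mathbb{R}} f$, $f'_{\mathbb{R}}(x;i,j)=\lim_{\alpha\downarrow0}(f(x+\alpha(\chi_i-\chi_j))-f(x))/\alpha$ (possibly $+\infty$), and $\phi_{\mathbb{R}}(x)=\min_{i,j\in N}f'_{\mathbb{R}}(x;i,j)$. *)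

theory Defs
  imports "HOL-Analysis.Analysis"
begin

text \<open>Functions R^n -> R \<union> {+\<infinity>} are modelled as maps into ereal that never take -\<infinity>.\<close>

definition domR :: "(real^'n \<Rightarrow> ereal) \<Rightarrow> (real^'n) set" where
  "domR f = {x. f x < \<infinity>}"

definition epigraph_ext :: "(real^'n \<Rightarrow> ereal) \<Rightarrow> ((real^'n) \<times> real) set" where
  "epigraph_ext f = {(x, t). f x \<le> ereal t}"

definition polyhedral_convex :: "(real^'n \<Rightarrow> ereal) \<Rightarrow> bool" where
  "polyhedral_convex f \<longleftrightarrow> (\<forall>x. f x \<noteq> -\<infinity>) \<and> polyhedron (epigraph_ext f) \<and> domR f \<noteq> {}"

definition dvec :: "'n::finite \<Rightarrow> 'n \<Rightarrow> real^'n" where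
  "dvec i j = axis i 1 - axis j 1"

definition M_convex :: "(real^'n::finite \<Rightarrow> ereal) \<Rightarrow> bool" where
  "M_convex f \<longleftrightarrow> polyhedral_convex f \<and>
     (\<forall>x\<in>domR f. \<forall>y\<in>domR f. \<forall>i. x$i > y$i \<longrightarrow>
        (\<exists>j. x$j < y$j \<and> (\<exists>\<epsilon>0>0. \<forall>\<epsilon>\<in>{0..\<epsilon>0}.
           f x + f y \<ge> f (x - \<epsilon> *\<^sub>R dvec i j) + f (y + \<epsilon> *\<^sub>R dvec i j))))"

definition dirderR :: "(real^'n::finite \<Rightarrow> ereal) \<Rightarrow> real^'n \<Rightarrow> 'n \<Rightarrow> 'n \<Rightarrow> ereal" where
  "dirderR f x i j = Lim (at_right 0) (\<lambda>\<alpha>::real. (f (x + \<alpha> *\<^sub>R dvec i j) - f x) / ereal \<alpha>)"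

definition phiR :: "(real^'n::finite \<Rightarrow> ereal) \<Rightarrow> real^'n \<Rightarrow> ereal" where
  "phiR f x = Min {dirderR f x i j | i j. True}"

end

theory Submission
  imports Defs
begin

text \<open>Write |v| for the l1-norm and let p \<le> f'(x;j,i) for all i, j. Suppose f y - f x < |y - x| p / 2,
  with defect c < 0 at y. The set A of points z with f z \<le> f x + c + |z - x| p / 2 is closed (the
  epigraph is closed) and bounded (it lies in the domain), so some z \<in> A is l1-closest to x; z \<noteq> x
  because c < 0. The exchange axiom for x and z moves z by e(\<chi>i - \<chi>j) towards x, shrinking the
  distance by 2e, while the simultaneous move of x by e(\<chi>j - \<chi>i) costs at least e p by convexity.
  Hence the moved point still lies in A, contradicting the choice of z.\<close>

lemma epigraph_convex_diff_quotient_mono: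
  fixes f :: "real^'n::finite \<Rightarrow> ereal"
  assumes cv: "convex (epigraph_ext f)" and nm: "\<forall>z. f z \<noteq> -\<infinity>"
    and fx: "f x = ereal fx" and s: "0 < s" "s \<le> t"
  shows "(f (x + s *\<^sub>R d) - f x) / ereal s \<le> (f (x + t *\<^sub>R d) - f x) / ereal t"
proof (cases "f (x + t *\<^sub>R d)")
  case PInf
  then show ?thesis using s fx by simp
next
  case MInf
  then show ?thesis using nm by blast
next
  case (real r)
  have t: "t > 0" using s by linarith
  define u where "u = s / t"
  have u: "0 < u" "u \<le> 1" using s t by (auto simp: u_def)
  have "(x, fx) \<in> epigraph_ext f" "(x + t *\<^sub>R d, r) \<in> epigraph_ext f"
    using fx real by (simp_all add: epigraph_ext_def)
  from convexD[OF cv this, of "1 - u" u]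
  have "(1 - u) *\<^sub>R (x, fx) + u *\<^sub>R (x + t *\<^sub>R d, r) \<in> epigraph_ext f"
    using u by simp
  moreover have "(1 - u) *\<^sub>R x + u *\<^sub>R (x + t *\<^sub>R d) = x + s *\<^sub>R d"
    using t by (simp add: u_def algebra_simps)
  ultimately have le: "f (x + s *\<^sub>R d) \<le> ereal ((1 - u) * fx + u * r)"
    by (simp add: epigraph_ext_def)
  then obtain a where a: "f (x + s *\<^sub>R d) = ereal a"
    using nm by (cases "f (x + s *\<^sub>R d)") auto
  have "(a - fx) / s \<le> (r - fx) / t"
    using le a s t by (simp add: u_def field_simps)
  then show ?thesis using a real fx s t by simp
qed

lemma epigraph_convex_Lim_diff_quotient_le:
  fixes f :: "real^'n::finite \<Rightarrow> ereal"
  assumes cv: "convex (epigraph_ext f)" and nm: "\<forall>z. f z \<noteq> -\<infinity>"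
    and fx: "f x = ereal fx" and t: "0 < t"
  shows "Lim (at_right 0) (\<lambda>\<alpha>::real. (f (x + \<alpha> *\<^sub>R d) - f x) / ereal \<alpha>)
         \<le> (f (x + t *\<^sub>R d) - f x) / ereal t"
proof -
  define q where "q = (\<lambda>\<alpha>::real. (f (x + \<alpha> *\<^sub>R d) - f x) / ereal \<alpha>)"
  define L where "L = (INF s\<in>{0<..}. q s)"
  have mono: "\<And>s s'. 0 < s \<Longrightarrow> s \<le> s' \<Longrightarrow> q s \<le> q s'"
    unfolding q_def using epigraph_convex_diff_quotient_mono[OF cv nm fx] by blast
  have "(q \<longlongrightarrow> L) (at_right 0)"
  proof (rule order_tendstoI)
    fix a assume "a < L"
    then show "\<forall>\<^sub>F s in at_right 0. a < q s"
      unfolding L_def eventually_at_right[OF zero_less_one]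
      by (intro exI[of _ 1]) (auto intro: less_le_trans INF_lower)
  next
    fix a assume "L < a"
    then obtain t0 where t0: "t0 > 0" "q t0 < a"
      unfolding L_def by (auto simp: INF_less_iff)
    then have "\<And>s. 0 < s \<Longrightarrow> s < t0 \<Longrightarrow> q s < a"
      using mono by (meson le_less_trans less_imp_le)
    then show "\<forall>\<^sub>F s in at_right 0. q s < a"
      unfolding eventually_at_right[OF zero_less_one]
      using t0 by (intro exI[of _ "min 1 t0"]) auto
  qed
  then have "Lim (at_right 0) q = L"
    by (intro tendsto_Lim) (simp_all add: trivial_limit_at_right_real)
  also have "L \<le> q t" unfolding L_def using t by (auto intro: INF_lower)
  finally show ?thesis unfolding q_def .
qed

lemma dirderR_le_diff_quotient:
  assumes "polyhedral_convex f" and "f x = ereal fx" and "0 < t"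
  shows "dirderR f x i j \<le> (f (x + t *\<^sub>R dvec i j) - f x) / ereal t"
  unfolding dirderR_def using assms
  by (intro epigraph_convex_Lim_diff_quotient_le)
     (auto simp: polyhedral_convex_def polyhedron_imp_convex)

lemma dirderR_same: "f x = ereal fx \<Longrightarrow> dirderR f x i i = 0"
  by (simp add: dirderR_def dvec_def tendsto_Lim[OF _ tendsto_const] trivial_limit_at_right_real)

lemma phiR_le_dirderR: "phiR f x \<le> dirderR f x i j"
proof -
  have "{dirderR f x i j | i j. True} = (\<lambda>(i, j). dirderR f x i j) ` UNIV" by auto
  then have "finite {dirderR f x i j | i j. True}" by simp
  then show ?thesis unfolding phiR_def by (rule Min_le) blast
qed

lemma sum_abs_diff_add_dvec:
  fixes x z :: "real^'n::finite"
  assumes "0 < e" "e \<le> x$i - z$i" "e \<le> z$j - x$j"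
  shows "(\<Sum>k\<in>UNIV. \<bar>(z + e *\<^sub>R dvec i j)$k - x$k\<bar>) = (\<Sum>k\<in>UNIV. \<bar>z$k - x$k\<bar>) - 2 * e"
proof -
  have "i \<noteq> j" using assms by (cases "i = j") auto
  then have "\<bar>(z + e *\<^sub>R dvec i j)$k - x$k\<bar>
      = \<bar>z$k - x$k\<bar> - (if k = i then e else 0) - (if k = j then e else 0)" for k
    using assms by (auto simp: dvec_def axis_def)
  then show ?thesis by (simp add: sum_subtractf)
qed

lemma closed_sublevel_below_continuous:
  assumes "closed (epigraph_ext f)" and "continuous_on UNIV r"
  shows "closed {z. f z \<le> ereal (r z)}"
proof -
  have "{z. f z \<le> ereal (r z)} = (\<lambda>z. (z, r z)) -` epigraph_ext f"
    by (auto simp: epigraph_ext_def)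
  moreover have "continuous_on UNIV (\<lambda>z. (z, r z))"
    using assms(2) by (intro continuous_intros)
  ultimately show ?thesis using closed_vimage[OF assms(1)] by simp
qed

lemma M_convex_exchange_towards:
  assumes M: "M_convex f" and x: "x \<in> domR f" and z: "z \<in> domR f" and "z \<noteq> x"
  obtains i j e where "0 < e" "e \<le> x$i - z$i" "e \<le> z$j - x$j"
    and "f (x + e *\<^sub>R dvec j i) + f (z + e *\<^sub>R dvec i j) \<le> f x + f z"
proof -
  have exch: "\<And>u v i. u \<in> domR f \<Longrightarrow> v \<in> domR f \<Longrightarrow> u$i > v$i \<Longrightarrow>
      \<exists>j. u$j < v$j \<and> (\<exists>\<epsilon>0>0. \<forall>\<epsilon>\<in>{0..\<epsilon>0}.
        f u + f v \<ge> f (u - \<epsilon> *\<^sub>R dvec i j) + f (v + \<epsilon> *\<^sub>R dvec i j))"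
    using M unfolding M_convex_def by blast
  obtain i where i: "x$i > z$i"
  proof (rule ccontr)
    assume "\<not> thesis"
    then have le: "\<And>k. x$k \<le> z$k" using that by (meson not_le)
    obtain k where "z$k \<noteq> x$k" using \<open>z \<noteq> x\<close> by (auto simp: vec_eq_iff)
    then have "z$k > x$k" using le[of k] by simp
    then obtain j where "z$j < x$j" using exch[OF z x] by blast
    then show False using le[of j] by simp
  qed
  obtain j e0 where j: "x$j < z$j" and "e0 > 0"
    and e0: "\<And>e. e \<in> {0..e0} \<Longrightarrow> f (x - e *\<^sub>R dvec i j) + f (z + e *\<^sub>R dvec i j) \<le> f x + f z"
    using exch[OF x z i] by blast
  define e where "e = min e0 (min (x$i - z$i) (z$j - x$j))"
  have "0 < e" "e \<le> x$i - z$i" "e \<le> z$j - x$j" "e \<in> {0..e0}"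
    using \<open>e0 > 0\<close> i j by (auto simp: e_def)
  moreover have "x - e *\<^sub>R dvec i j = x + e *\<^sub>R dvec j i"
    by (simp add: dvec_def algebra_simps)
  ultimately show thesis using that e0 by metis
qed

lemma M_convex_diff_ge_real:
  fixes f :: "real^'n::finite \<Rightarrow> ereal"
  assumes M: "M_convex f" and bd: "bounded (domR f)"
    and fx: "f x = ereal fx" and fy: "f y = ereal fy"
    and p: "\<And>i j. ereal p \<le> dirderR f x i j"
  shows "(1/2) * (\<Sum>k\<in>UNIV. \<bar>y$k - x$k\<bar>) * p \<le> fy - fx"
proof (rule ccontr)
  define D where "D = (\<lambda>z::real^'n. \<Sum>k\<in>UNIV. \<bar>z$k - x$k\<bar>)"
  define c where "c = fy - fx - (1/2) * D y * p"
  define r where "r = (\<lambda>z. fx + c + (1/2) * p * D z)"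
  define A where "A = {z. f z \<le> ereal (r z)}"
  assume "\<not> ?thesis"
  then have "c < 0" unfolding c_def D_def by simp
  have pc: "polyhedral_convex f" using M by (simp add: M_convex_def)
  then have nm: "\<forall>z. f z \<noteq> -\<infinity>" by (simp add: polyhedral_convex_def)
  have contD: "continuous_on S D" for S unfolding D_def by (intro continuous_intros)
  have "closed A"
    unfolding A_def r_def using pc contD
    by (intro closed_sublevel_below_continuous continuous_intros)
       (auto simp: polyhedral_convex_def polyhedron_imp_closed)
  moreover have Adom: "A \<subseteq> domR f"
    unfolding A_def domR_def by (auto intro: le_less_trans)
  ultimately have cA: "compact A" using bd by (simp add: compact_eq_bounded_closed bounded_subset)
  have "y \<in> A" unfolding A_def r_def c_def using fy by simp
  then obtain z where zA: "z \<in> A" and zmin: "\<And>w. w \<in> A \<Longrightarrow> D z \<le> D w"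
    using continuous_attains_inf[OF cA _ contD] by blast
  then have zdom: "z \<in> domR f" using Adom by blast
  obtain fz where fz: "f z = ereal fz" using zdom nm by (cases "f z") (auto simp: domR_def)
  have fzr: "fz \<le> r z" using zA fz by (simp add: A_def)
  have "z \<noteq> x"
  proof
    assume "z = x"
    then have "D z = 0" by (simp add: D_def)
    then show False using fzr fx fz \<open>z = x\<close> \<open>c < 0\<close> by (simp add: r_def)
  qed
  moreover have "x \<in> domR f" using fx by (simp add: domR_def)
  ultimately obtain i j e where e: "0 < e" "e \<le> x$i - z$i" "e \<le> z$j - x$j"
    and ex: "f (x + e *\<^sub>R dvec j i) + f (z + e *\<^sub>R dvec i j) \<le> f x + f z"
    using M_convex_exchange_towards[OF M _ zdom] by blast
  define z' where "z' = z + e *\<^sub>R dvec i j"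
  have Dz': "D z' = D z - 2 * e"
    unfolding D_def z'_def using sum_abs_diff_add_dvec[OF e] by simp
  have ex': "f (x + e *\<^sub>R dvec j i) + f z' \<le> ereal (fx + fz)"
    using ex fx fz unfolding z'_def by simp
  obtain a where a: "f (x + e *\<^sub>R dvec j i) = ereal a"
    using ex' nm by (cases "f (x + e *\<^sub>R dvec j i)"; cases "f z'") auto
  obtain b where b: "f z' = ereal b"
    using ex' nm a by (cases "f z'") auto
  have "ereal p \<le> (f (x + e *\<^sub>R dvec j i) - f x) / ereal e"
    using p dirderR_le_diff_quotient[OF pc fx e(1)] by (rule order_trans)
  then have "e * p \<le> a - fx" using a fx e(1) by (simp add: field_simps)
  moreover have "a + b \<le> fx + fz" using ex' a b by simp
  moreover have "p * D z = p * D z' + 2 * (e * p)" unfolding Dz' by (simp add: algebra_simps)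
  ultimately have "b \<le> r z'" using fzr unfolding r_def by linarith
  then have "D z \<le> D z'" using b by (intro zmin) (simp add: A_def)
  then show False using Dz' e(1) by simp
qed

theorem mainTheorem13:
  fixes f :: "real^'n::finite \<Rightarrow> ereal"
  assumes "M_convex f"
    and "bounded (domR f)"
    and "x \<in> domR f" and "y \<in> domR f"
  shows "f y - f x \<ge> ereal ((1/2) * (\<Sum>i\<in>UNIV. \<bar>y$i - x$i\<bar>)) * phiR f x"
proof -
  define D where "D = (\<Sum>i\<in>UNIV. \<bar>y$i - x$i\<bar>)"
  have nm: "\<forall>z. f z \<noteq> -\<infinity>" using assms(1) by (simp add: M_convex_def polyhedral_convex_def)
  obtain fx fy where fx: "f x = ereal fx" and fy: "f y = ereal fy"
    using assms(3,4) nm by (cases "f x"; cases "f y") (auto simp: domR_def)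
  have "phiR f x \<le> 0"
    using phiR_le_dirderR[of f x undefined undefined] dirderR_same[of f x fx] fx by simp
  then consider p where "phiR f x = ereal p" | "phiR f x = -\<infinity>" by (cases "phiR f x") auto
  then show ?thesis
  proof cases
    case 1
    have "(1/2) * D * p \<le> fy - fx"
      unfolding D_def by (rule M_convex_diff_ge_real[OF assms(1,2) fx fy]) (metis 1 phiR_le_dirderR)
    then show ?thesis using 1 fx fy by (simp add: D_def[symmetric])
  next
    case 2
    \<comment> \<open>in ereal, 0 * -\<infinity> = 0, so the case y = x needs separate treatment\<close>
    have "D \<ge> 0" unfolding D_def by (simp add: sum_nonneg)
    moreover have "y = x" if "D = 0"
      using that unfolding D_def by (subst (asm) sum_nonneg_eq_0_iff) (auto simp: vec_eq_iff)
    ultimately consider "D > 0" | "y = x" "D = 0" by fastforce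
    then show ?thesis using 2 fx by cases (simp_all add: D_def[symmetric])
  qed
qed

end
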